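(* Let $(a_n)_{n\ge0}$ and $(a'_n)_{n\ge0}$ be sequences of positive real numbers and $(b_n)_{n\ge0}$ a sequence of real numbers such that, for all sufficiently large $n$: (i) $\frac{a'_{n+1}}{a'_n}\leq\frac{a_{n+1}}{a_n}$; (ii) $a_n\leq a'_n+b_n$; and (iii) $\frac{b_n}{a'_n}<R$ for some fixed real number $R$. Then there exists a strictly increasing sequence of natural numbers $(n_i)_{i\ge0}$ such that \[\lim_{i\to\infty}\frac{a_{n_i+1}/a_{n_i}}{a'_{n_i+1}/a'_{n_i}}=1.\] *)

theory Defs
  imports "HOL-Analysis.Analysis"
begin

end

theory Submission
  imports Defs
begin

text \<open>The quotients \<open>c n = a n / a' n\<close> are positive and, by (i) and by (ii)+(iii),
  eventually nondecreasing and bounded above by \<open>1 + R\<close>. Hence they converge to some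
  \<open>L > 0\<close>, so \<open>c (n + 1) / c n \<longrightarrow> 1\<close>; this ratio is exactly the quotient of the two
  growth ratios, and the whole sequence \<open>n\<^sub>i = i\<close> works.\<close>

lemma eventually_incseq_bounded_convergent:
  fixes X :: "nat \<Rightarrow> real"
  assumes "\<forall>\<^sub>F n in sequentially. X n \<le> X (Suc n)"
    and "\<forall>\<^sub>F n in sequentially. X n \<le> B"
  obtains L where "X \<longlonglongrightarrow> L" and "\<forall>\<^sub>F n in sequentially. X n \<le> L"
proof -
  obtain N where mono: "\<And>n. n \<ge> N \<Longrightarrow> X n \<le> X (Suc n)"
    and bounded: "\<And>n. n \<ge> N \<Longrightarrow> X n \<le> B"
    using eventually_conj[OF assms] unfolding eventually_sequentially by blast
  have "incseq (\<lambda>i. X (i + N))"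
    by (rule incseq_SucI) (simp add: mono)
  moreover have "\<forall>i. X (i + N) \<le> B"
    by (simp add: bounded)
  ultimately obtain L where lim: "(\<lambda>i. X (i + N)) \<longlonglongrightarrow> L" and le: "\<forall>i. X (i + N) \<le> L"
    by (rule incseq_convergent)
  from lim have "X \<longlonglongrightarrow> L"
    by (rule LIMSEQ_offset)
  moreover have "\<forall>\<^sub>F n in sequentially. X n \<le> L"
    unfolding eventually_sequentially by (metis le le_add_diff_inverse2)
  ultimately show thesis
    by (rule that)
qed

lemma LIMSEQ_Suc_divide_1:
  fixes X :: "nat \<Rightarrow> 'a::real_normed_field"
  assumes "X \<longlonglongrightarrow> L" and "L \<noteq> 0"
  shows "(\<lambda>n. X (Suc n) / X n) \<longlonglongrightarrow> 1"
  using tendsto_divide[OF LIMSEQ_Suc[OF assms(1)] assms] assms(2) by simp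

lemma divide_le_divide_if_ratio_le:
  fixes x x' y y' :: real
  assumes "x > 0" "x' > 0" "y' > 0" and "y' / x' \<le> y / x"
  shows "x / x' \<le> y / y'"
proof -
  have "y' * x \<le> y * x'"
    using assms by (simp add: field_simps)
  then show ?thesis
    using assms by (simp add: field_simps)
qed

lemma divide_le_one_plus_if_le_add:
  fixes x x' z R :: real
  assumes "x' > 0" and "x \<le> x' + z" and "z / x' < R"
  shows "x / x' \<le> 1 + R"
proof -
  have "x / x' \<le> (x' + z) / x'"
    using assms by (simp add: divide_right_mono)
  also have "\<dots> = 1 + z / x'"
    using assms by (simp add: field_simps)
  finally show ?thesis
    using assms by simp
qed

theorem mainTheorem3:
  fixes a a' b :: "nat \<Rightarrow> real"
  assumes apos: "\<And>n. a n > 0"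
    and a'pos: "\<And>n. a' n > 0"
    and ev: "\<exists>R::real. \<forall>\<^sub>F n in sequentially.
               a' (Suc n) / a' n \<le> a (Suc n) / a n
             \<and> a n \<le> a' n + b n
             \<and> b n / a' n < R"
  shows "\<exists>ni :: nat \<Rightarrow> nat. strict_mono ni \<and>
           ((\<lambda>i. (a (Suc (ni i)) / a (ni i)) / (a' (Suc (ni i)) / a' (ni i)))
              \<longlonglongrightarrow> 1)"
proof -
  define c where "c n = a n / a' n" for n
  obtain R where hyps: "\<forall>\<^sub>F n in sequentially.
      a' (Suc n) / a' n \<le> a (Suc n) / a n \<and> a n \<le> a' n + b n \<and> b n / a' n < R"
    using ev by blast
  have "\<forall>\<^sub>F n in sequentially. c n \<le> c (Suc n)"
    using hyps unfolding c_def
    by eventually_elim (use apos a'pos divide_le_divide_if_ratio_le in blast)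
  moreover have "\<forall>\<^sub>F n in sequentially. c n \<le> 1 + R"
    using hyps unfolding c_def
    by eventually_elim (use a'pos divide_le_one_plus_if_le_add in blast)
  ultimately obtain L where cL: "c \<longlonglongrightarrow> L" and "\<forall>\<^sub>F n in sequentially. c n \<le> L"
    by (rule eventually_incseq_bounded_convergent)
  then have "L > 0"
    using apos a'pos unfolding c_def eventually_sequentially
    by (meson divide_pos_pos le_refl less_le_trans)
  have "(a (Suc n) / a n) / (a' (Suc n) / a' n) = c (Suc n) / c n" for n
    unfolding c_def using apos[of n] a'pos[of n] by (simp add: field_simps)
  then have "(\<lambda>n. (a (Suc n) / a n) / (a' (Suc n) / a' n)) \<longlonglongrightarrow> 1"
    using LIMSEQ_Suc_divide_1[OF cL] \<open>L > 0\<close> by simp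
  then show ?thesis
    by (intro exI[of _ id]) (simp add: strict_mono_def)
qed

end
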